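(* For $(u,\rho)\in H_{0,\infty}(\mathbb R)\times L^2_{\rm const}(\mathbb R)$ let $X_e(x)=(x,\bar u(x),c,1,u_x(x),u_x^2(x)+\bar\rho^2(x),\bar\rho(x),k)$ and write $g(u,\rho)$ for the function $x\mapsto g(X_e(x))$. Then $g(u,\rho)-1\in L^1(\mathbb R)$, and: (i) If $(u_1,\rho_1),(u_2,\rho_2)\in H_{0,\infty}(\mathbb R)\times L^2_{\rm const}(\mathbb R)$ satisfy $\operatorname{meas}(\{x:(\rho_1(x)=0\text{ and }\rho_2(x)\ne0)\text{ or }(\rho_1(x)\ne0\text{ and }\rho_2(x)=0)\})=0$, then $$\|g(u_1,\rho_1)-g(u_2,\rho_2)\|_{L^1}\le C\big(\|u_{1,x}-u_{2,x}\|_{L^2}+\|\bar\rho_1-\bar\rho_2\|_{L^2}\big),$$ where $C$ depends only on the $L^2$-norms of $u_{1,x},u_{2,x},\bar\rho_1,\bar\rho_2$. (ii) If $(u_n,\rho_n)\to(u,\rho)$ in $H_{0,\infty}(\mathbb R)\times L^2_{\rm const}(\mathbb R)$ and for all $n$, $\operatorname{meas}(\{x:(\rho(x)=0\text{ and }\rho_n(x)\ne0)\text{ or }(\rho(x)\ne0\text{ and }\rho_n(x)=0)\})=0$, then $g(u_n,\rho_n)-1\to g(u,\rho)-1$ in $L^1(\mathbb R)$.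
   Context: Fix a smooth $\chi:\mathbb R\to\mathbb R$ with $\chi'\ge0$, $\chi=0$ on $(-\infty,0]$, $\chi=1$ on $[1,\infty)$. $H_{0,\infty}(\mathbb R)=\{u=\bar u+c\chi:\bar u\in H^1(\mathbb R),c\in\mathbb R\}$ with norm $\|\bar u\|_{H^1}+|c|$; $L^2_{\rm const}(\mathbb R)=\{\rho=\bar\rho+k:\bar\rho\in L^2(\mathbb R),k\in\mathbb R\}$ with norm $\|\bar\rho\|_{L^2}+|k|$. For $x\in\mathbb R^8$: $g_1(x)=|x_5|+2|x_7x_8|+2x_4$, $g_2(x)=x_4+x_6$, $\Omega_1=\{x:g_1(x)\le g_2(x),\ x_5\le0,\ x_7+x_8x_4=0\}$, and $g=g_1$ on $\Omega_1$, $g=g_2$ on $\mathbb R^8\setminus\Omega_1$. *)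

theory Defs
  imports "HOL-Analysis.Analysis"
begin

definition cutoff :: "(real \<Rightarrow> real) \<Rightarrow> bool" where
  "cutoff chi \<longleftrightarrow>
     (\<forall>n x. ((deriv ^^ n) chi) differentiable (at x)) \<and>
     (\<forall>x. deriv chi x \<ge> 0) \<and>
     (\<forall>x. x \<le> 0 \<longrightarrow> chi x = 0) \<and>
     (\<forall>x. x \<ge> 1 \<longrightarrow> chi x = 1)"

definition L2 :: "(real \<Rightarrow> real) \<Rightarrow> bool" where
  "L2 f \<longleftrightarrow> f \<in> borel_measurable lborel \<and> integrable lborel (\<lambda>x. (f x)\<^sup>2)"

definition L2norm :: "(real \<Rightarrow> real) \<Rightarrow> real" where
  "L2norm f = sqrt (\<integral>x. (f x)\<^sup>2 \<partial>lborel)"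

definition L1norm :: "(real \<Rightarrow> real) \<Rightarrow> real" where
  "L1norm f = (\<integral>x. \<bar>f x\<bar> \<partial>lborel)"

text \<open>H^1(R): ub in L^2 with (weak) derivative w in L^2; ub is taken to be the
  absolutely continuous representative, ub b - ub a = integral of w over [a,b].\<close>
definition H1 :: "(real \<Rightarrow> real) \<Rightarrow> (real \<Rightarrow> real) \<Rightarrow> bool" where
  "H1 ub w \<longleftrightarrow> L2 ub \<and> L2 w \<and>
     (\<forall>a b. a \<le> b \<longrightarrow> ub b - ub a = (LBINT x=a..b. w x))"

definition H1norm :: "(real \<Rightarrow> real) \<Rightarrow> (real \<Rightarrow> real) \<Rightarrow> real" where
  "H1norm ub w = sqrt ((L2norm ub)\<^sup>2 + (L2norm w)\<^sup>2)"

definition gg1 :: "real \<Rightarrow> real \<Rightarrow> real \<Rightarrow> real \<Rightarrow> real \<Rightarrow> real \<Rightarrow> real \<Rightarrow> real \<Rightarrow> real" where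
  "gg1 x1 x2 x3 x4 x5 x6 x7 x8 = \<bar>x5\<bar> + 2 * \<bar>x7 * x8\<bar> + 2 * x4"

definition gg2 :: "real \<Rightarrow> real \<Rightarrow> real \<Rightarrow> real \<Rightarrow> real \<Rightarrow> real \<Rightarrow> real \<Rightarrow> real \<Rightarrow> real" where
  "gg2 x1 x2 x3 x4 x5 x6 x7 x8 = x4 + x6"

definition in_Omega1 :: "real \<Rightarrow> real \<Rightarrow> real \<Rightarrow> real \<Rightarrow> real \<Rightarrow> real \<Rightarrow> real \<Rightarrow> real \<Rightarrow> bool" where
  "in_Omega1 x1 x2 x3 x4 x5 x6 x7 x8 \<longleftrightarrow>
     gg1 x1 x2 x3 x4 x5 x6 x7 x8 \<le> gg2 x1 x2 x3 x4 x5 x6 x7 x8 \<and> x5 \<le> 0 \<and> x7 + x8 * x4 = 0"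

definition gg :: "real \<Rightarrow> real \<Rightarrow> real \<Rightarrow> real \<Rightarrow> real \<Rightarrow> real \<Rightarrow> real \<Rightarrow> real \<Rightarrow> real" where
  "gg x1 x2 x3 x4 x5 x6 x7 x8 =
     (if in_Omega1 x1 x2 x3 x4 x5 x6 x7 x8 then gg1 x1 x2 x3 x4 x5 x6 x7 x8
      else gg2 x1 x2 x3 x4 x5 x6 x7 x8)"

text \<open>u = ub + c chi with ub' = w; u_x = w + c chi'.\<close>
definition ux :: "(real \<Rightarrow> real) \<Rightarrow> (real \<Rightarrow> real) \<Rightarrow> real \<Rightarrow> real \<Rightarrow> real" where
  "ux chi w c x = w x + c * deriv chi x"

definition gX :: "(real \<Rightarrow> real) \<Rightarrow> (real \<Rightarrow> real) \<Rightarrow> (real \<Rightarrow> real) \<Rightarrow> real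
                  \<Rightarrow> (real \<Rightarrow> real) \<Rightarrow> real \<Rightarrow> real \<Rightarrow> real" where
  "gX chi ub w c rb k x =
     gg x (ub x) c 1 (ux chi w c x) ((ux chi w c x)\<^sup>2 + (rb x)\<^sup>2) (rb x) k"

text \<open>The set where exactly one of rho1 = rb1 + k1, rho2 = rb2 + k2 vanishes.\<close>
definition zero_mismatch :: "(real \<Rightarrow> real) \<Rightarrow> real \<Rightarrow> (real \<Rightarrow> real) \<Rightarrow> real \<Rightarrow> real set" where
  "zero_mismatch rb1 k1 rb2 k2 =
     {x. (rb1 x + k1 = 0 \<and> rb2 x + k2 \<noteq> 0) \<or> (rb1 x + k1 \<noteq> 0 \<and> rb2 x + k2 = 0)}"

end

theory Submission
  imports Defs
begin

text \<open>
  Omega1 lies in {rho = 0}; on it g = |u_x| + 2 rb^2 + 2 <= 1 + u_x^2 + rb^2, which forces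
  |u_x| >= 1, and off Omega1 g = 1 + u_x^2 + rb^2. Hence 0 <= g - 1 <= u_x^2 + rb^2.
  If rho1 and rho2 vanish on the same set, comparing the two branches pointwise gives
  |g1 - g2| <= |u1 - u2| (|u1| + |u2|) + 2 |rb1 - rb2| (|rb1| + |rb2|), the linear term of the
  Omega1 branch being absorbed because |u| >= 1 there; Cauchy-Schwarz turns this into (i).
  Part (ii) follows from (i), since u_x = ub_x + c chi' depends continuously on (ub, c).
\<close>

lemma L2_measurable: "L2 f \<Longrightarrow> f \<in> borel_measurable lborel"
  by (simp add: L2_def)

lemma L2_integrable_power2: "L2 f \<Longrightarrow> integrable lborel (\<lambda>x. (f x)\<^sup>2)"
  by (simp add: L2_def)

lemma L2_cmult:
  assumes "L2 f" shows "L2 (\<lambda>x. c * f x)"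
  unfolding L2_def
proof
  show "(\<lambda>x. c * f x) \<in> borel_measurable lborel" using L2_measurable[OF assms] by measurable
  show "integrable lborel (\<lambda>x. (c * f x)\<^sup>2)"
    using assms by (simp add: L2_integrable_power2 power_mult_distrib)
qed

lemma L2_integrable_abs_mult:
  assumes "L2 f" "L2 g" shows "integrable lborel (\<lambda>x. \<bar>f x\<bar> * \<bar>g x\<bar>)"
proof (rule Bochner_Integration.integrable_bound)
  show "integrable lborel (\<lambda>x. (f x)\<^sup>2 + (g x)\<^sup>2)"
    using assms by (simp add: L2_integrable_power2)
  show "(\<lambda>x. \<bar>f x\<bar> * \<bar>g x\<bar>) \<in> borel_measurable lborel"
    using assms[THEN L2_measurable] by measurable
  have "\<bar>a\<bar> * \<bar>b\<bar> \<le> a\<^sup>2 + b\<^sup>2" for a b :: real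
  proof -
    have "2 * (\<bar>a\<bar> * \<bar>b\<bar>) \<le> a\<^sup>2 + b\<^sup>2"
      using sum_squares_bound[of "\<bar>a\<bar>" "\<bar>b\<bar>"] by (simp add: mult.assoc)
    moreover have "0 \<le> \<bar>a\<bar> * \<bar>b\<bar>" by simp
    ultimately show ?thesis by linarith
  qed
  then show "AE x in lborel. norm (\<bar>f x\<bar> * \<bar>g x\<bar>) \<le> norm ((f x)\<^sup>2 + (g x)\<^sup>2)"
    by simp
qed

lemma power2_sum_le_abs: "(a + b)\<^sup>2 \<le> a\<^sup>2 + 2 * (\<bar>a\<bar> * \<bar>b\<bar>) + (b::real)\<^sup>2"
  using abs_ge_self[of "a * b"] by (simp add: power2_sum abs_mult)

lemma L2_add:
  assumes "L2 f" "L2 g" shows "L2 (\<lambda>x. f x + g x)"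
  unfolding L2_def
proof
  show "(\<lambda>x. f x + g x) \<in> borel_measurable lborel"
    using assms[THEN L2_measurable] by measurable
  show "integrable lborel (\<lambda>x. (f x + g x)\<^sup>2)"
  proof (rule Bochner_Integration.integrable_bound)
    show "integrable lborel (\<lambda>x. (f x)\<^sup>2 + 2 * (\<bar>f x\<bar> * \<bar>g x\<bar>) + (g x)\<^sup>2)"
      using assms by (simp add: L2_integrable_power2 L2_integrable_abs_mult)
    show "(\<lambda>x. (f x + g x)\<^sup>2) \<in> borel_measurable lborel"
      using assms[THEN L2_measurable] by measurable
    show "AE x in lborel. norm ((f x + g x)\<^sup>2) \<le> norm ((f x)\<^sup>2 + 2 * (\<bar>f x\<bar> * \<bar>g x\<bar>) + (g x)\<^sup>2)"
      using power2_sum_le_abs by (simp add: add_nonneg_nonneg)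
  qed
qed

lemma L2_diff: "L2 f \<Longrightarrow> L2 g \<Longrightarrow> L2 (\<lambda>x. f x - g x)"
  using L2_add[of f "\<lambda>x. -1 * g x"] L2_cmult[of g "-1"] by simp

lemma L2norm_nonneg: "0 \<le> L2norm f"
  by (simp add: L2norm_def)

lemma L2norm_power2: "(L2norm f)\<^sup>2 = (\<integral>x. (f x)\<^sup>2 \<partial>lborel)"
  by (simp add: L2norm_def)

lemma L2norm_cmult: "L2norm (\<lambda>x. c * f x) = \<bar>c\<bar> * L2norm f"
  by (simp add: L2norm_def power_mult_distrib real_sqrt_mult)

lemma L2norm_diff_commute: "L2norm (\<lambda>x. f x - g x) = L2norm (\<lambda>x. g x - f x)"
  by (simp add: L2norm_def power2_commute)

lemma L2norm_le_H1norm: "L2norm w \<le> H1norm ub w"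
  by (simp add: H1norm_def real_le_rsqrt L2norm_nonneg)

lemma L2_Cauchy_Schwarz:
  assumes "L2 f" "L2 g"
  shows "(\<integral>x. \<bar>f x\<bar> * \<bar>g x\<bar> \<partial>lborel) \<le> L2norm f * L2norm g"
proof -
  note [measurable] = assms[THEN L2_measurable]
  define I where "I = (\<integral>x. \<bar>f x\<bar> * \<bar>g x\<bar> \<partial>lborel)"
  have nn_integral_eq: "(\<integral>\<^sup>+x. ennreal (h x) \<partial>lborel) = ennreal (\<integral>x. h x \<partial>lborel)"
    if "integrable lborel h" "\<And>x. 0 \<le> h x" for h :: "real \<Rightarrow> real"
    using that by (intro nn_integral_eq_integral) auto
  have I_nonneg: "0 \<le> I" unfolding I_def by (intro integral_nonneg_AE) auto
  have "(\<integral>\<^sup>+x. ennreal \<bar>f x\<bar> * ennreal \<bar>g x\<bar> \<partial>lborel)\<^sup>2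
          \<le> (\<integral>\<^sup>+x. (ennreal \<bar>f x\<bar>)\<^sup>2 \<partial>lborel) * (\<integral>\<^sup>+x. (ennreal \<bar>g x\<bar>)\<^sup>2 \<partial>lborel)"
    by (intro Cauchy_Schwarz_nn_integral) measurable
  then have "ennreal (I\<^sup>2) \<le> ennreal ((L2norm f * L2norm g)\<^sup>2)"
    using assms I_nonneg
    by (simp add: I_def L2norm_power2 nn_integral_eq L2_integrable_abs_mult L2_integrable_power2
        ennreal_power power_mult_distrib flip: ennreal_mult'')
  then have "I\<^sup>2 \<le> (L2norm f * L2norm g)\<^sup>2"
    by simp
  then show ?thesis
    unfolding I_def[symmetric] using I_nonneg L2norm_nonneg[of f] L2norm_nonneg[of g]
    by (simp add: power2_le_iff_abs_le)
qed

lemma L2norm_triangle: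
  assumes "L2 f" "L2 g" shows "L2norm (\<lambda>x. f x + g x) \<le> L2norm f + L2norm g"
proof -
  have "(L2norm (\<lambda>x. f x + g x))\<^sup>2 \<le> (\<integral>x. (f x)\<^sup>2 + 2 * (\<bar>f x\<bar> * \<bar>g x\<bar>) + (g x)\<^sup>2 \<partial>lborel)"
    unfolding L2norm_power2
  proof (rule integral_mono_AE')
    show "integrable lborel (\<lambda>x. (f x)\<^sup>2 + 2 * (\<bar>f x\<bar> * \<bar>g x\<bar>) + (g x)\<^sup>2)"
      using assms by (simp add: L2_integrable_power2 L2_integrable_abs_mult)
  qed (auto simp: power2_sum_le_abs)
  also have "\<dots> = (L2norm f)\<^sup>2 + 2 * (\<integral>x. \<bar>f x\<bar> * \<bar>g x\<bar> \<partial>lborel) + (L2norm g)\<^sup>2"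
    using assms by (simp add: L2norm_power2 L2_integrable_power2 L2_integrable_abs_mult)
  also have "\<dots> \<le> (L2norm f + L2norm g)\<^sup>2"
    using L2_Cauchy_Schwarz[OF assms] by (simp add: power2_sum)
  finally show ?thesis
    using L2norm_nonneg[of f] L2norm_nonneg[of g] by (simp add: power2_le_iff_abs_le)
qed

lemma L2norm_le_add_L2norm_diff:
  assumes "L2 f" "L2 g" shows "L2norm g \<le> L2norm f + L2norm (\<lambda>x. f x - g x)"
  using L2norm_triangle[OF assms(1) L2_diff[OF assms(2,1)]]
  by (simp add: L2norm_diff_commute[of g])

lemma cutoff_deriv_continuous:
  assumes "cutoff chi" shows "continuous_on UNIV (deriv chi)"
proof -
  have "((deriv ^^ Suc 0) chi) differentiable (at x)" for x
    using assms unfolding cutoff_def by blast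
  then show ?thesis
    by (simp add: continuous_at_imp_continuous_on differentiable_imp_continuous_within)
qed

lemma cutoff_deriv_measurable[measurable]: "cutoff chi \<Longrightarrow> deriv chi \<in> borel_measurable lborel"
  using borel_measurable_continuous_onI[OF cutoff_deriv_continuous] by simp

lemma cutoff_deriv_eq_0:
  assumes chi: "cutoff chi" and x: "x \<notin> {0..1}" shows "deriv chi x = 0"
proof -
  have left: "\<And>y. y \<le> 0 \<Longrightarrow> chi y = 0" and right: "\<And>y. 1 \<le> y \<Longrightarrow> chi y = 1"
    using chi unfolding cutoff_def by blast+
  have "(chi has_field_derivative 0) (at x)"
  proof (cases "x < 0")
    case True
    show ?thesis
      by (rule has_field_derivative_transform_within_open[of "\<lambda>_. 0" _ _ "{..<0}"])
        (use True left in auto)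
  next
    case False
    with x have "1 < x" by auto
    show ?thesis
      by (rule has_field_derivative_transform_within_open[of "\<lambda>_. 1" _ _ "{1<..}"])
        (use \<open>1 < x\<close> right in auto)
  qed
  then show ?thesis by (rule DERIV_imp_deriv)
qed

lemma L2_cutoff_deriv:
  assumes chi: "cutoff chi" shows "L2 (deriv chi)"
proof -
  have "continuous_on {0..1} (\<lambda>x. (deriv chi x)\<^sup>2)"
    using cutoff_deriv_continuous[OF chi] by (intro continuous_intros) (auto intro: continuous_on_subset)
  then have "integrable lborel (\<lambda>x. indicator {0..1::real} x *\<^sub>R (deriv chi x)\<^sup>2)"
    by (intro borel_integrable_compact) auto
  also have "(\<lambda>x. indicator {0..1::real} x *\<^sub>R (deriv chi x)\<^sup>2) = (\<lambda>x. (deriv chi x)\<^sup>2)"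
    using cutoff_deriv_eq_0[OF chi] by (auto simp: indicator_def fun_eq_iff)
  finally show ?thesis
    using cutoff_deriv_measurable[OF chi] by (simp add: L2_def)
qed

lemma L2_ux: "cutoff chi \<Longrightarrow> L2 w \<Longrightarrow> L2 (ux chi w c)"
  unfolding ux_def[abs_def] by (intro L2_add L2_cmult L2_cutoff_deriv)

lemma L2norm_ux_diff_le:
  assumes chi: "cutoff chi" and "L2 w1" "L2 w2"
  shows "L2norm (\<lambda>x. ux chi w1 c1 x - ux chi w2 c2 x)
           \<le> L2norm (\<lambda>x. w1 x - w2 x) + \<bar>c1 - c2\<bar> * L2norm (deriv chi)"
proof -
  have "(\<lambda>x. ux chi w1 c1 x - ux chi w2 c2 x) = (\<lambda>x. (w1 x - w2 x) + (c1 - c2) * deriv chi x)"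
    by (simp add: ux_def fun_eq_iff algebra_simps)
  then show ?thesis
    using L2norm_triangle[OF L2_diff[OF assms(2,3)] L2_cmult[OF L2_cutoff_deriv[OF chi]]]
    by (simp add: L2norm_cmult)
qed

definition g_profile :: "real \<Rightarrow> real \<Rightarrow> real \<Rightarrow> real" where
  "g_profile u r k =
     (if \<bar>u\<bar> + 2 * r\<^sup>2 + 2 \<le> 1 + u\<^sup>2 + r\<^sup>2 \<and> u \<le> 0 \<and> r + k = 0
      then \<bar>u\<bar> + 2 * r\<^sup>2 + 2 else 1 + u\<^sup>2 + r\<^sup>2)"

lemma gg_at_g_profile_point: "gg a1 a2 a3 1 u (u\<^sup>2 + r\<^sup>2) r k = g_profile u r k"
proof (cases "r + k = 0")
  case True
  then have "\<bar>r * k\<bar> = r\<^sup>2" by (simp add: eq_neg_iff_add_eq_0[symmetric] power2_eq_square)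
  then show ?thesis
    by (simp only: gg_def in_Omega1_def gg1_def gg2_def g_profile_def mult_1_right add.assoc)
next
  case False
  then show ?thesis by (simp add: gg_def in_Omega1_def g_profile_def gg2_def add.assoc)
qed

lemma gX_eq_g_profile: "gX chi ub w c rb k x = g_profile (ux chi w c x) (rb x) k"
  by (simp add: gX_def gg_at_g_profile_point)

lemma g_profile_bounds: "1 \<le> g_profile u r k" "g_profile u r k \<le> 1 + u\<^sup>2 + r\<^sup>2"
  unfolding g_profile_def by (smt (verit) zero_le_power2 abs_ge_zero)+

lemma abs_power2_diff_le: "\<bar>(a::real)\<^sup>2 - b\<^sup>2\<bar> \<le> \<bar>a - b\<bar> * (\<bar>a\<bar> + \<bar>b\<bar>)"
proof -
  have "\<bar>a\<^sup>2 - b\<^sup>2\<bar> = \<bar>a - b\<bar> * \<bar>a + b\<bar>"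
    by (simp add: power2_eq_square algebra_simps flip: abs_mult)
  also have "\<dots> \<le> \<bar>a - b\<bar> * (\<bar>a\<bar> + \<bar>b\<bar>)"
    by (intro mult_left_mono abs_triangle_ineq) auto
  finally show ?thesis .
qed

lemma one_le_abs_if_abs_add_one_le_power2:
  assumes "\<bar>u\<bar> + 1 \<le> (u::real)\<^sup>2" shows "1 \<le> \<bar>u\<bar>"
proof (rule ccontr)
  assume "\<not> 1 \<le> \<bar>u\<bar>"
  then have "\<bar>u\<bar> * \<bar>u\<bar> \<le> \<bar>u\<bar>" by (intro mult_left_le) auto
  then show False using assms by (simp add: power2_eq_square)
qed

lemma g_profile_diff_le:
  assumes same_type: "r1 + k1 = 0 \<longleftrightarrow> r2 + k2 = 0"
  shows "g_profile u1 r1 k1 - g_profile u2 r2 k2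
           \<le> \<bar>u1 - u2\<bar> * (\<bar>u1\<bar> + \<bar>u2\<bar>) + 2 * (\<bar>r1 - r2\<bar> * (\<bar>r1\<bar> + \<bar>r2\<bar>))"
    (is "_ \<le> ?Su + 2 * ?Sr")
proof -
  define F1 where "F1 u r = \<bar>u\<bar> + 2 * r\<^sup>2 + 2" for u r :: real
  define F2 where "F2 u r = 1 + u\<^sup>2 + r\<^sup>2" for u r :: real
  define region where "region u r k \<longleftrightarrow> F1 u r \<le> F2 u r \<and> u \<le> 0 \<and> r + k = 0" for u r k :: real
  have G: "g_profile u r k = (if region u r k then F1 u r else F2 u r)" for u r k
    unfolding g_profile_def region_def F1_def F2_def ..
  have sq_u: "\<bar>u1\<^sup>2 - u2\<^sup>2\<bar> \<le> ?Su" and sq_r: "\<bar>r1\<^sup>2 - r2\<^sup>2\<bar> \<le> ?Sr"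
    by (rule abs_power2_diff_le)+
  have F2_diff: "F2 u1 r1 - F2 u2 r2 \<le> ?Su + ?Sr"
    using sq_u sq_r unfolding F2_def by linarith
  have F1_diff: "F1 u1 r1 - F1 u2 r2 \<le> ?Su + 2 * ?Sr" if "region u2 r2 k2"
  proof -
    have "1 \<le> \<bar>u2\<bar>"
      using that zero_le_power2[of r2]
      by (intro one_le_abs_if_abs_add_one_le_power2) (simp only: region_def F1_def F2_def, linarith)
    then have "\<bar>u1 - u2\<bar> \<le> \<bar>u1 - u2\<bar> * \<bar>u2\<bar>" by (simp add: mult_le_cancel_left1)
    also have "\<dots> \<le> ?Su" by (simp add: mult_left_mono)
    finally have "\<bar>u1\<bar> - \<bar>u2\<bar> \<le> ?Su" by linarith
    then show ?thesis using sq_r unfolding F1_def by linarith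
  qed
  show ?thesis
  proof (cases "region u1 r1 k1")
    case True
    then have "F1 u1 r1 \<le> F2 u1 r1" by (simp add: region_def)
    then show ?thesis
      using True F1_diff F2_diff by (simp add: G) (smt (verit) mult_nonneg_nonneg abs_ge_zero)
  next
    case not_region1: False
    show ?thesis
    proof (cases "region u2 r2 k2")
      case region2: True
      then have "r1 + k1 = 0" using same_type by (simp add: region_def)
      then consider "0 < u1" | "F2 u1 r1 < F1 u1 r1" using not_region1 by (auto simp: region_def)
      then show ?thesis
      proof cases
        case 1
        have "u2 \<le> 0" using region2 by (simp add: region_def)
        with 1 have "u1 * u1 \<le> \<bar>u1 - u2\<bar> * \<bar>u1\<bar>"
          using mult_right_mono[of u1 "\<bar>u1 - u2\<bar>" u1] by simp
        also have "\<dots> \<le> ?Su" by (simp add: mult_left_mono)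
        finally have "u1\<^sup>2 \<le> ?Su" by (simp add: power2_eq_square)
        then show ?thesis
          using not_region1 region2 sq_r
          by (simp add: G F1_def F2_def) (smt (verit) mult_nonneg_nonneg abs_ge_zero zero_le_power2)
      qed (use not_region1 region2 F1_diff in \<open>simp add: G\<close>)
    next
      case False
      then show ?thesis
        using not_region1 F2_diff by (simp add: G) (smt (verit) mult_nonneg_nonneg abs_ge_zero)
    qed
  qed
qed

lemma g_profile_lipschitz:
  assumes "r1 + k1 = 0 \<longleftrightarrow> r2 + k2 = 0"
  shows "\<bar>g_profile u1 r1 k1 - g_profile u2 r2 k2\<bar>
           \<le> \<bar>u1 - u2\<bar> * (\<bar>u1\<bar> + \<bar>u2\<bar>) + 2 * (\<bar>r1 - r2\<bar> * (\<bar>r1\<bar> + \<bar>r2\<bar>))"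
proof -
  have "g_profile u2 r2 k2 - g_profile u1 r1 k1
          \<le> \<bar>u1 - u2\<bar> * (\<bar>u1\<bar> + \<bar>u2\<bar>) + 2 * (\<bar>r1 - r2\<bar> * (\<bar>r1\<bar> + \<bar>r2\<bar>))"
    using g_profile_diff_le[OF assms[symmetric], of u2 u1] by (metis abs_minus_commute add.commute)
  then show ?thesis using g_profile_diff_le[OF assms, of u1 u2] unfolding abs_le_iff minus_diff_eq by blast
qed

lemma gX_measurable:
  assumes "cutoff chi" "L2 w" "L2 rb" shows "gX chi ub w c rb k \<in> borel_measurable lborel"
proof -
  note [measurable] = L2_measurable[OF assms(2)] L2_measurable[OF assms(3)] cutoff_deriv_measurable[OF assms(1)]
  have "gX chi ub w c rb k = (\<lambda>x. g_profile (ux chi w c x) (rb x) k)"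
    by (simp add: fun_eq_iff gX_eq_g_profile)
  also have "\<dots> \<in> borel_measurable lborel"
    unfolding g_profile_def ux_def by measurable
  finally show ?thesis .
qed

lemma integrable_gX_minus_1:
  assumes chi: "cutoff chi" and "H1 ub w" "L2 rb"
  shows "integrable lborel (\<lambda>x. gX chi ub w c rb k x - 1)"
proof (rule Bochner_Integration.integrable_bound)
  have U: "L2 (ux chi w c)" using assms by (simp add: H1_def L2_ux)
  show "integrable lborel (\<lambda>x. (ux chi w c x)\<^sup>2 + (rb x)\<^sup>2)"
    using U assms(3) by (simp add: L2_integrable_power2)
  show "(\<lambda>x. gX chi ub w c rb k x - 1) \<in> borel_measurable lborel"
    using gX_measurable[of chi w rb ub c k] assms by (simp add: H1_def)
  show "AE x in lborel. norm (gX chi ub w c rb k x - 1) \<le> norm ((ux chi w c x)\<^sup>2 + (rb x)\<^sup>2)"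
  proof (rule AE_I2)
    fix x
    have "\<bar>gX chi ub w c rb k x - 1\<bar> \<le> (ux chi w c x)\<^sup>2 + (rb x)\<^sup>2"
      using g_profile_bounds[of "ux chi w c x" "rb x" k] by (simp add: gX_eq_g_profile abs_le_iff)
    then show "norm (gX chi ub w c rb k x - 1) \<le> norm ((ux chi w c x)\<^sup>2 + (rb x)\<^sup>2)"
      by simp
  qed
qed

lemma L1norm_gX_diff_le:
  assumes chi: "cutoff chi" and h1: "H1 ub1 w1" "L2 rb1" and h2: "H1 ub2 w2" "L2 rb2"
    and mismatch: "zero_mismatch rb1 k1 rb2 k2 \<in> null_sets lborel"
  shows "L1norm (\<lambda>x. gX chi ub1 w1 c1 rb1 k1 x - gX chi ub2 w2 c2 rb2 k2 x)
           \<le> 2 * (L2norm (ux chi w1 c1) + L2norm (ux chi w2 c2) + L2norm rb1 + L2norm rb2)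
              * (L2norm (\<lambda>x. ux chi w1 c1 x - ux chi w2 c2 x) + L2norm (\<lambda>x. rb1 x - rb2 x))"
proof -
  define U1 where "U1 = ux chi w1 c1"
  define U2 where "U2 = ux chi w2 c2"
  define dU where "dU x = U1 x - U2 x" for x
  define dR where "dR x = rb1 x - rb2 x" for x
  have U: "L2 U1" "L2 U2" using h1 h2 by (simp_all add: U1_def U2_def H1_def L2_ux chi)
  have d: "L2 dU" "L2 dR" using U h1 h2 by (simp_all add: dU_def[abs_def] dR_def[abs_def] L2_diff)
  define B where "B x = \<bar>dU x\<bar> * \<bar>U1 x\<bar> + \<bar>dU x\<bar> * \<bar>U2 x\<bar> + 2 * (\<bar>dR x\<bar> * \<bar>rb1 x\<bar>)
    + 2 * (\<bar>dR x\<bar> * \<bar>rb2 x\<bar>)" for x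
  have same_zeros: "AE x in lborel. rb1 x + k1 = 0 \<longleftrightarrow> rb2 x + k2 = 0"
    by (rule AE_I'[OF mismatch]) (auto simp: zero_mismatch_def)
  have "L1norm (\<lambda>x. gX chi ub1 w1 c1 rb1 k1 x - gX chi ub2 w2 c2 rb2 k2 x) \<le> (\<integral>x. B x \<partial>lborel)"
    unfolding L1norm_def
  proof (rule integral_mono_AE')
    show "integrable lborel B"
      using U d h1 h2 by (simp add: B_def[abs_def] L2_integrable_abs_mult)
    show "AE x in lborel. \<bar>gX chi ub1 w1 c1 rb1 k1 x - gX chi ub2 w2 c2 rb2 k2 x\<bar> \<le> B x"
      using same_zeros
    proof eventually_elim
      case (elim x)
      from g_profile_lipschitz[OF elim, of "U1 x" "U2 x"] show ?case
        by (simp add: gX_eq_g_profile B_def dU_def dR_def U1_def U2_def distrib_left)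
    qed
  qed (simp add: B_def)
  also have "\<dots> \<le> L2norm dU * (L2norm U1 + L2norm U2) + 2 * (L2norm dR * (L2norm rb1 + L2norm rb2))"
    using L2_Cauchy_Schwarz[OF d(1) U(1)] L2_Cauchy_Schwarz[OF d(1) U(2)]
      L2_Cauchy_Schwarz[OF d(2) h1(2)] L2_Cauchy_Schwarz[OF d(2) h2(2)] U d h1 h2
    by (simp add: B_def[abs_def] L2_integrable_abs_mult distrib_left)
  also have "\<dots> \<le> 2 * (L2norm U1 + L2norm U2 + L2norm rb1 + L2norm rb2) * (L2norm dU + L2norm dR)"
  proof -
    have "0 \<le> L2norm dU * (L2norm U1 + L2norm U2) + 2 * (L2norm dU * (L2norm rb1 + L2norm rb2))
                + 2 * (L2norm dR * (L2norm U1 + L2norm U2))"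
      by (simp add: L2norm_nonneg add_nonneg_nonneg)
    then show ?thesis by (simp add: algebra_simps)
  qed
  finally show ?thesis
    unfolding U1_def U2_def dU_def dR_def .
qed

lemma L1norm_nonneg: "0 \<le> L1norm f"
  by (simp add: L1norm_def)

lemma L1norm_diff_commute: "L1norm (\<lambda>x. f x - g x) = L1norm (\<lambda>x. g x - f x)"
  by (simp add: L1norm_def abs_minus_commute)

lemma L2norm_ux_diff_tendsto_0:
  fixes wn :: "nat \<Rightarrow> real \<Rightarrow> real" and cn :: "nat \<Rightarrow> real"
  assumes chi: "cutoff chi" and "L2 w" "\<And>n. L2 (wn n)"
    and w_lim: "(\<lambda>n. L2norm (\<lambda>x. wn n x - w x)) \<longlonglongrightarrow> 0" and c_lim: "cn \<longlonglongrightarrow> c"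
  shows "(\<lambda>n. L2norm (\<lambda>x. ux chi w c x - ux chi (wn n) (cn n) x)) \<longlonglongrightarrow> 0"
proof (rule Lim_null_comparison)
  show "\<forall>\<^sub>F n in sequentially. norm (L2norm (\<lambda>x. ux chi w c x - ux chi (wn n) (cn n) x))
          \<le> L2norm (\<lambda>x. wn n x - w x) + \<bar>cn n - c\<bar> * L2norm (deriv chi)"
    using L2norm_ux_diff_le[OF chi assms(2,3), of c]
    by (intro always_eventually allI)
      (simp add: L2norm_nonneg L2norm_diff_commute[of w] abs_minus_commute[of c])
  have "(\<lambda>n. \<bar>cn n - c\<bar>) \<longlonglongrightarrow> 0"
    using c_lim by (simp add: tendsto_rabs_zero_iff LIM_zero_iff)
  then show "(\<lambda>n. L2norm (\<lambda>x. wn n x - w x) + \<bar>cn n - c\<bar> * L2norm (deriv chi)) \<longlonglongrightarrow> 0"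
    using w_lim tendsto_add_zero tendsto_mult_left_zero by blast
qed

lemma L1norm_gX_diff_tendsto_0_of_L2norm_tendsto_0:
  fixes ubn wn rbn :: "nat \<Rightarrow> real \<Rightarrow> real" and cn kn :: "nat \<Rightarrow> real"
  assumes chi: "cutoff chi" and hn: "\<And>n. H1 (ubn n) (wn n)" "\<And>n. L2 (rbn n)"
    and h: "H1 ub w" "L2 rb"
    and mismatch: "\<And>n. zero_mismatch rb k (rbn n) (kn n) \<in> null_sets lborel"
    and ux_lim: "(\<lambda>n. L2norm (\<lambda>x. ux chi w c x - ux chi (wn n) (cn n) x)) \<longlonglongrightarrow> 0"
    and rb_lim: "(\<lambda>n. L2norm (\<lambda>x. rb x - rbn n x)) \<longlonglongrightarrow> 0"
  shows "(\<lambda>n. L1norm (\<lambda>x. gX chi (ubn n) (wn n) (cn n) (rbn n) (kn n) x - gX chi ub w c rb k x))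
           \<longlonglongrightarrow> 0"
proof -
  define U where "U = ux chi w c"
  define U_n where "U_n n = ux chi (wn n) (cn n)" for n
  define e where "e n = L2norm (\<lambda>x. U x - U_n n x)" for n
  define f where "f n = L2norm (\<lambda>x. rb x - rbn n x)" for n
  have LU: "L2 U" "\<And>n. L2 (U_n n)"
    using h hn by (simp_all add: U_def U_n_def H1_def L2_ux chi)
  define T where "T n = 2 * (L2norm U + (L2norm U + e n) + L2norm rb + (L2norm rb + f n)) * (e n + f n)"
    for n
  have bound: "L1norm (\<lambda>x. gX chi (ubn n) (wn n) (cn n) (rbn n) (kn n) x - gX chi ub w c rb k x)
    \<le> T n" for n
  proof -
    have "L1norm (\<lambda>x. gX chi (ubn n) (wn n) (cn n) (rbn n) (kn n) x - gX chi ub w c rb k x)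
        \<le> 2 * (L2norm U + L2norm (U_n n) + L2norm rb + L2norm (rbn n)) * (e n + f n)"
      unfolding L1norm_diff_commute[of "gX chi (ubn n) _ _ _ _"] U_def U_n_def e_def f_def
      by (rule L1norm_gX_diff_le[OF chi h hn mismatch])
    also have "\<dots> \<le> T n"
      unfolding T_def e_def f_def
      using L2norm_le_add_L2norm_diff[OF LU(1) LU(2)[of n]] L2norm_le_add_L2norm_diff[OF h(2) hn(2)]
      by (intro mult_right_mono mult_left_mono add_mono) (simp_all add: L2norm_nonneg)
    finally show ?thesis .
  qed
  have "(\<lambda>n. 2 * (L2norm U + (L2norm U + e n) + L2norm rb + (L2norm rb + f n)) * (e n + f n))
      \<longlonglongrightarrow> 2 * (L2norm U + (L2norm U + 0) + L2norm rb + (L2norm rb + 0)) * (0 + 0)"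
    using ux_lim rb_lim unfolding e_def f_def U_def U_n_def
    by (intro tendsto_mult tendsto_add tendsto_const)
  then have T: "T \<longlonglongrightarrow> 0"
    by (simp add: T_def[abs_def])
  show ?thesis
  proof (rule Lim_null_comparison[OF _ T])
    show "\<forall>\<^sub>F n in sequentially.
        norm (L1norm (\<lambda>x. gX chi (ubn n) (wn n) (cn n) (rbn n) (kn n) x - gX chi ub w c rb k x)) \<le> T n"
      by (intro always_eventually allI) (simp add: L1norm_nonneg bound)
  qed
qed

lemma L1norm_gX_diff_tendsto_0:
  fixes ubn wn rbn :: "nat \<Rightarrow> real \<Rightarrow> real" and cn kn :: "nat \<Rightarrow> real"
  assumes chi: "cutoff chi" and hn: "\<And>n. H1 (ubn n) (wn n)" "\<And>n. L2 (rbn n)"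
    and h: "H1 ub w" "L2 rb"
    and lim: "(\<lambda>n. H1norm (\<lambda>x. ubn n x - ub x) (\<lambda>x. wn n x - w x) + \<bar>cn n - c\<bar>
                + L2norm (\<lambda>x. rbn n x - rb x) + \<bar>kn n - k\<bar>) \<longlonglongrightarrow> 0"
      (is "?s \<longlonglongrightarrow> 0")
    and mismatch: "\<And>n. zero_mismatch rb k (rbn n) (kn n) \<in> null_sets lborel"
  shows "(\<lambda>n. L1norm (\<lambda>x. gX chi (ubn n) (wn n) (cn n) (rbn n) (kn n) x - gX chi ub w c rb k x))
           \<longlonglongrightarrow> 0"
proof -
  have s_bounds: "L2norm (\<lambda>x. wn n x - w x) \<le> ?s n" "\<bar>cn n - c\<bar> \<le> ?s n"
    "L2norm (\<lambda>x. rbn n x - rb x) \<le> ?s n" for n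
    using L2norm_le_H1norm[of "\<lambda>x. wn n x - w x" "\<lambda>x. ubn n x - ub x"]
      L2norm_nonneg[of "\<lambda>x. wn n x - w x"] L2norm_nonneg[of "\<lambda>x. rbn n x - rb x"]
      abs_ge_zero[of "cn n - c"] abs_ge_zero[of "kn n - k"]
    by linarith+
  have w_lim: "(\<lambda>n. L2norm (\<lambda>x. wn n x - w x)) \<longlonglongrightarrow> 0"
    by (rule Lim_null_comparison[OF _ lim]) (use s_bounds(1) in \<open>simp add: L2norm_nonneg\<close>)
  have "(\<lambda>n. cn n - c) \<longlonglongrightarrow> 0"
    by (rule Lim_null_comparison[OF _ lim]) (use s_bounds(2) in simp)
  then have c_lim: "cn \<longlonglongrightarrow> c"
    by (simp add: LIM_zero_iff)
  have rb_lim: "(\<lambda>n. L2norm (\<lambda>x. rb x - rbn n x)) \<longlonglongrightarrow> 0"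
    by (rule Lim_null_comparison[OF _ lim])
      (use s_bounds(3) in \<open>simp add: L2norm_nonneg L2norm_diff_commute[of rb]\<close>)
  have Lw: "L2 w" "\<And>n. L2 (wn n)"
    using h hn by (simp_all add: H1_def)
  show ?thesis
    by (rule L1norm_gX_diff_tendsto_0_of_L2norm_tendsto_0[OF chi hn h mismatch
          L2norm_ux_diff_tendsto_0[OF chi Lw w_lim c_lim] rb_lim])
qed

theorem lemma7p2:
  fixes chi :: "real \<Rightarrow> real"
  assumes chi: "cutoff chi"
  shows
   "(\<forall>ub w c rb k. H1 ub w \<and> L2 rb \<longrightarrow>
        integrable lborel (\<lambda>x. gX chi ub w c rb k x - 1))
    \<and>
    (\<exists>C :: real \<Rightarrow> real \<Rightarrow> real \<Rightarrow> real \<Rightarrow> real.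
       \<forall>ub1 w1 c1 rb1 k1 ub2 w2 c2 rb2 k2.
         H1 ub1 w1 \<and> L2 rb1 \<and> H1 ub2 w2 \<and> L2 rb2 \<and>
         zero_mismatch rb1 k1 rb2 k2 \<in> null_sets lborel \<longrightarrow>
         L1norm (\<lambda>x. gX chi ub1 w1 c1 rb1 k1 x - gX chi ub2 w2 c2 rb2 k2 x)
           \<le> C (L2norm (ux chi w1 c1)) (L2norm (ux chi w2 c2)) (L2norm rb1) (L2norm rb2)
              * (L2norm (\<lambda>x. ux chi w1 c1 x - ux chi w2 c2 x)
                 + L2norm (\<lambda>x. rb1 x - rb2 x)))
    \<and>
    (\<forall>(ubn :: nat \<Rightarrow> real \<Rightarrow> real) wn cn rbn kn ub w c rb k.
       (\<forall>n. H1 (ubn n) (wn n) \<and> L2 (rbn n)) \<and> H1 ub w \<and> L2 rb \<and>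
       (\<lambda>n. H1norm (\<lambda>x. ubn n x - ub x) (\<lambda>x. wn n x - w x) + \<bar>cn n - c\<bar>
            + L2norm (\<lambda>x. rbn n x - rb x) + \<bar>kn n - k\<bar>) \<longlonglongrightarrow> 0 \<and>
       (\<forall>n. zero_mismatch rb k (rbn n) (kn n) \<in> null_sets lborel) \<longrightarrow>
       (\<lambda>n. L1norm (\<lambda>x. (gX chi (ubn n) (wn n) (cn n) (rbn n) (kn n) x - 1)
                       - (gX chi ub w c rb k x - 1))) \<longlonglongrightarrow> 0)"
  using integrable_gX_minus_1[OF chi] L1norm_gX_diff_le[OF chi] L1norm_gX_diff_tendsto_0[OF chi]
  by (intro conjI exI[of _ "\<lambda>a b c d. 2 * (a + b + c + d)"] allI impI; elim conjE; simp)

end
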